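(* Let $(S,E,f)$ be a reduced and closed observation table for $U$ and $D$ as defined below, let $\alpha\in S\cdot E$, and let $w\in\Sigma^*$ be a prefix of $\alpha$ with $\alpha=w\alpha'$. Let $r=\delta_f^*(\epsilon,w)$. Then $\alpha\in U$ if and only if $r\alpha'\in U$.
   Context: $\Sigma$ is a finite alphabet, $U\subseteq\Sigma^\omega$ an $\omega$-language recognizable by a weak deterministic Büchi automaton, and $D\subseteq\Sigma^\omega$ a regular set with trivial right-congruence (for all $w\in\Sigma^*,\alpha$: $\alpha\in D\iff w\alpha\in D$). An observation table $(S,E,f)$ consists of a prefix-closed finite $S\subseteq\Sigma^*$, a suffix-closed finite set $E$ of ultimately periodic words with $E\cap D=\emptyset$, and $f:(S\cup S\Sigma)\times E\to\{\text{yes},\text{no}\}$ with $f(s,\alpha)=\text{yes}$ iff $s\alpha\in U$. For $s\in S\cup S\Sigma$ let $f_s(\alpha)=f(s,\alpha)$. The table is reduced if $f_s\neq f_t$ for distinct $s,t\in S$, and closed if for every $s\in S\Sigma$ there is $t\in S$ with $f_s=f_t$. For a reduced closed table, $\mathcal{T}_{S,f}=(\Sigma,S,\delta_f,\epsilon)$ with $\delta_f(s,\sigma)$ the unique $t\in S$ with $f_{s\sigma}=f_t$, and $\delta_f^*$ the extension of $\delta_f$ to finite words. *)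

theory Defs
  imports Main "HOL-Library.Omega_Words_Fun"
begin

definition ultimately_periodic :: "'a word \<Rightarrow> bool" where
  "ultimately_periodic \<alpha> \<longleftrightarrow> (\<exists>u v. v \<noteq> [] \<and> \<alpha> = u \<frown> v\<^sup>\<omega>)"

definition dba_wf :: "nat set \<Rightarrow> nat \<Rightarrow> (nat \<Rightarrow> 'a \<Rightarrow> nat) \<Rightarrow> nat set \<Rightarrow> bool" where
  "dba_wf Q q0 \<delta> F \<longleftrightarrow> finite Q \<and> q0 \<in> Q \<and> (\<forall>q\<in>Q. \<forall>a. \<delta> q a \<in> Q) \<and> F \<subseteq> Q"

definition dba_run :: "(nat \<Rightarrow> 'a \<Rightarrow> nat) \<Rightarrow> nat \<Rightarrow> 'a word \<Rightarrow> nat \<Rightarrow> nat" where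
  "dba_run \<delta> q0 \<alpha> n = fold (\<lambda>a q. \<delta> q a) (prefix n \<alpha>) q0"

definition dba_lang :: "nat \<Rightarrow> (nat \<Rightarrow> 'a \<Rightarrow> nat) \<Rightarrow> nat set \<Rightarrow> 'a word set" where
  "dba_lang q0 \<delta> F = {\<alpha>. \<exists>\<^sub>\<infinity>n. dba_run \<delta> q0 \<alpha> n \<in> F}"

definition dba_weak :: "nat set \<Rightarrow> (nat \<Rightarrow> 'a \<Rightarrow> nat) \<Rightarrow> nat set \<Rightarrow> bool" where
  "dba_weak Q \<delta> F \<longleftrightarrow>
     (\<forall>q\<in>Q. \<forall>q'\<in>Q. (\<exists>u. fold (\<lambda>a p. \<delta> p a) u q = q') \<and> (\<exists>v. fold (\<lambda>a p. \<delta> p a) v q' = q)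
        \<longrightarrow> (q \<in> F \<longleftrightarrow> q' \<in> F))"

definition weak_dba_recognizable :: "'a word set \<Rightarrow> bool" where
  "weak_dba_recognizable U \<longleftrightarrow>
     (\<exists>Q q0 (\<delta> :: nat \<Rightarrow> 'a \<Rightarrow> nat) F. dba_wf Q q0 \<delta> F \<and> dba_weak Q \<delta> F \<and> U = dba_lang q0 \<delta> F)"

definition omega_regular :: "'a word set \<Rightarrow> bool" where
  "omega_regular L \<longleftrightarrow>
     (\<exists>(Q :: nat set) I (\<Delta> :: nat \<Rightarrow> 'a \<Rightarrow> nat set) F.
        finite Q \<and> I \<subseteq> Q \<and> F \<subseteq> Q \<and> (\<forall>q\<in>Q. \<forall>a. \<Delta> q a \<subseteq> Q) \<and>
        L = {\<alpha>. \<exists>\<rho>. \<rho> 0 \<in> I \<and> (\<forall>n. \<rho> (Suc n) \<in> \<Delta> (\<rho> n) (\<alpha> n))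
                       \<and> (\<exists>\<^sub>\<infinity>n. \<rho> n \<in> F)})"

definition trivial_right_congruence :: "'a word set \<Rightarrow> bool" where
  "trivial_right_congruence D \<longleftrightarrow> (\<forall>w \<alpha>. \<alpha> \<in> D \<longleftrightarrow> w \<frown> \<alpha> \<in> D)"

definition obs_table :: "'a word set \<Rightarrow> 'a word set \<Rightarrow> 'a list set \<Rightarrow> 'a word set
                          \<Rightarrow> ('a list \<Rightarrow> 'a word \<Rightarrow> bool) \<Rightarrow> bool" where
  "obs_table U D S E f \<longleftrightarrow>
     finite S \<and> (\<forall>u v. u @ v \<in> S \<longrightarrow> u \<in> S) \<and>
     finite E \<and> (\<forall>u \<beta>. u \<frown> \<beta> \<in> E \<longrightarrow> \<beta> \<in> E) \<and>
     (\<forall>e\<in>E. ultimately_periodic e) \<and> E \<inter> D = {} \<and>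
     (\<forall>s e. (s \<in> S \<or> (\<exists>s'\<in>S. \<exists>\<sigma>. s = s' @ [\<sigma>])) \<and> e \<in> E \<longrightarrow> (f s e \<longleftrightarrow> s \<frown> e \<in> U))"

definition row_eq :: "'a word set \<Rightarrow> ('a list \<Rightarrow> 'a word \<Rightarrow> bool) \<Rightarrow> 'a list \<Rightarrow> 'a list \<Rightarrow> bool" where
  "row_eq E f s t \<longleftrightarrow> (\<forall>e\<in>E. f s e = f t e)"

definition table_reduced :: "'a list set \<Rightarrow> 'a word set \<Rightarrow> ('a list \<Rightarrow> 'a word \<Rightarrow> bool) \<Rightarrow> bool" where
  "table_reduced S E f \<longleftrightarrow> (\<forall>s\<in>S. \<forall>t\<in>S. s \<noteq> t \<longrightarrow> \<not> row_eq E f s t)"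

definition table_closed :: "'a list set \<Rightarrow> 'a word set \<Rightarrow> ('a list \<Rightarrow> 'a word \<Rightarrow> bool) \<Rightarrow> bool" where
  "table_closed S E f \<longleftrightarrow> (\<forall>s\<in>S. \<forall>\<sigma>. \<exists>t\<in>S. row_eq E f (s @ [\<sigma>]) t)"

definition delta_f :: "'a list set \<Rightarrow> 'a word set \<Rightarrow> ('a list \<Rightarrow> 'a word \<Rightarrow> bool) \<Rightarrow> 'a list \<Rightarrow> 'a \<Rightarrow> 'a list" where
  "delta_f S E f s \<sigma> = (THE t. t \<in> S \<and> row_eq E f (s @ [\<sigma>]) t)"

definition delta_f_star :: "'a list set \<Rightarrow> 'a word set \<Rightarrow> ('a list \<Rightarrow> 'a word \<Rightarrow> bool) \<Rightarrow> 'a list \<Rightarrow> 'a list \<Rightarrow> 'a list" where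
  "delta_f_star S E f s w = fold (\<lambda>\<sigma> q. delta_f S E f q \<sigma>) w s"

end

theory Submission
  imports Defs
begin

text \<open>The transition function \<open>\<delta>\<^sub>f\<close> reads each access word \<open>s \<in> S\<close> back to \<open>s\<close>, and each of
  its transitions replaces a row \<open>s\<sigma>\<close> by an equal row \<open>t \<in> S\<close>. Write \<open>\<alpha> = s e\<close> with
  \<open>s \<in> S\<close>, \<open>e \<in> E\<close>. If \<open>w\<close> is a prefix of \<open>s\<close>, then \<open>w \<in> S\<close> and \<open>r = w\<close>. Otherwise
  \<open>w = s u\<close> and \<open>e = u \<alpha>'\<close>; by suffix-closedness of \<open>E\<close> every tail of \<open>e\<close> is an
  experiment, so each transition taken while reading \<open>u\<close> from \<open>s\<close> preserves membership
  of the word in \<open>U\<close>.\<close>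

lemma conc_eq_conc_prefixE:
  assumes "a \<frown> x = b \<frown> y" "length a \<le> length b"
  obtains v where "b = a @ v" "x = v \<frown> y"
proof -
  obtain v z where x: "x = v \<frown> z" "length v = length b - length a"
    by (rule word_split)
  have "(a @ v) \<frown> z = b \<frown> y" "length (a @ v) = length b"
    using assms x by auto
  then have "b = a @ v" "z = y" by auto
  with x(1) show thesis by (intro that) simp_all
qed

lemma delta_f_star_Nil [simp]: "delta_f_star S E f s [] = s"
  by (simp add: delta_f_star_def)

lemma delta_f_star_Cons [simp]:
  "delta_f_star S E f s (\<sigma> # w) = delta_f_star S E f (delta_f S E f s \<sigma>) w"
  by (simp add: delta_f_star_def)

lemma delta_f_star_append:
  "delta_f_star S E f s (u @ v) = delta_f_star S E f (delta_f_star S E f s u) v"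
  by (simp add: delta_f_star_def)

lemma delta_f_eqI:
  assumes "table_reduced S E f" "t \<in> S" "row_eq E f (s @ [\<sigma>]) t"
  shows "delta_f S E f s \<sigma> = t"
  unfolding delta_f_def
proof (rule the_equality)
  show "t \<in> S \<and> row_eq E f (s @ [\<sigma>]) t" using assms(2,3) ..
next
  fix t' assume "t' \<in> S \<and> row_eq E f (s @ [\<sigma>]) t'"
  with assms(3) have "t' \<in> S" "row_eq E f t' t" by (auto simp: row_eq_def)
  with assms(1,2) show "t' = t" unfolding table_reduced_def by blast
qed

lemma
  assumes "table_reduced S E f" "table_closed S E f" "s \<in> S"
  shows delta_f_mem: "delta_f S E f s \<sigma> \<in> S"
    and row_eq_delta_f: "row_eq E f (s @ [\<sigma>]) (delta_f S E f s \<sigma>)"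
proof -
  obtain t where "t \<in> S" "row_eq E f (s @ [\<sigma>]) t"
    using assms(2,3) unfolding table_closed_def by blast
  with delta_f_eqI[OF assms(1)] show "delta_f S E f s \<sigma> \<in> S"
    and "row_eq E f (s @ [\<sigma>]) (delta_f S E f s \<sigma>)" by simp_all
qed

lemma delta_f_star_access_word:
  assumes "table_reduced S E f" "\<forall>u v. u @ v \<in> S \<longrightarrow> u \<in> S" "s @ w \<in> S"
  shows "delta_f_star S E f s w = s @ w"
  using assms(3)
proof (induction w arbitrary: s)
  case Nil
  show ?case by simp
next
  case (Cons \<sigma> w)
  then have "(s @ [\<sigma>]) @ w \<in> S" by simp
  with assms(2) have "s @ [\<sigma>] \<in> S" by blast
  then have "delta_f S E f s \<sigma> = s @ [\<sigma>]"
    by (rule delta_f_eqI[OF assms(1)]) (simp add: row_eq_def)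
  with Cons.IH \<open>(s @ [\<sigma>]) @ w \<in> S\<close> show ?case by simp
qed

lemma row_eq_conc_mem_iff:
  assumes "obs_table U D S E f" "s \<in> S" "t \<in> S" "row_eq E f (s @ [\<sigma>]) t" "e \<in> E"
  shows "(s @ [\<sigma>]) \<frown> e \<in> U \<longleftrightarrow> t \<frown> e \<in> U"
proof -
  have "(s @ [\<sigma>]) \<frown> e \<in> U \<longleftrightarrow> f (s @ [\<sigma>]) e"
    using assms(1,2,5) unfolding obs_table_def by blast
  also have "\<dots> \<longleftrightarrow> f t e"
    using assms(4,5) unfolding row_eq_def by blast
  also have "\<dots> \<longleftrightarrow> t \<frown> e \<in> U"
    using assms(1,3,5) unfolding obs_table_def by blast
  finally show ?thesis .
qed

lemma delta_f_star_conc_mem_iff: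
  assumes "obs_table U D S E f" "table_reduced S E f" "table_closed S E f"
    and "s \<in> S" "u \<frown> \<beta> \<in> E"
  shows "s \<frown> (u \<frown> \<beta>) \<in> U \<longleftrightarrow> delta_f_star S E f s u \<frown> \<beta> \<in> U"
  using assms(4,5)
proof (induction u arbitrary: s)
  case Nil
  show ?case by simp
next
  case (Cons \<sigma> u)
  let ?t = "delta_f S E f s \<sigma>"
  have "[\<sigma>] \<frown> (u \<frown> \<beta>) \<in> E" using Cons.prems(2) by simp
  with assms(1) have "u \<frown> \<beta> \<in> E" unfolding obs_table_def by blast
  have "s \<frown> ((\<sigma> # u) \<frown> \<beta>) \<in> U \<longleftrightarrow> (s @ [\<sigma>]) \<frown> (u \<frown> \<beta>) \<in> U" by simp
  also have "\<dots> \<longleftrightarrow> ?t \<frown> (u \<frown> \<beta>) \<in> U"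
    using row_eq_conc_mem_iff[OF assms(1) Cons.prems(1)] \<open>u \<frown> \<beta> \<in> E\<close>
      delta_f_mem[OF assms(2,3) Cons.prems(1)] row_eq_delta_f[OF assms(2,3) Cons.prems(1)]
    by blast
  also have "\<dots> \<longleftrightarrow> delta_f_star S E f ?t u \<frown> \<beta> \<in> U"
    using Cons.IH delta_f_mem[OF assms(2,3) Cons.prems(1)] \<open>u \<frown> \<beta> \<in> E\<close> by blast
  finally show ?case by simp
qed

theorem lemma6:
  fixes U D :: "('a :: finite) word set"
    and S :: "'a list set" and E :: "'a word set" and f :: "'a list \<Rightarrow> 'a word \<Rightarrow> bool"
    and \<alpha> \<alpha>' :: "'a word" and w :: "'a list"
  assumes "weak_dba_recognizable U"
    and "omega_regular D" and "trivial_right_congruence D"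
    and "obs_table U D S E f"
    and "table_reduced S E f" and "table_closed S E f"
    and "\<exists>s\<in>S. \<exists>e\<in>E. \<alpha> = s \<frown> e"
    and "\<alpha> = w \<frown> \<alpha>'"
  shows "\<alpha> \<in> U \<longleftrightarrow> delta_f_star S E f [] w \<frown> \<alpha>' \<in> U"
proof -
  obtain s e where "s \<in> S" "e \<in> E" and \<alpha>: "\<alpha> = s \<frown> e" using assms(7) by blast
  have prefix_closed: "\<forall>u v. u @ v \<in> S \<longrightarrow> u \<in> S"
    using assms(4) unfolding obs_table_def by blast
  note access_word = delta_f_star_access_word[OF assms(5) prefix_closed, of "[]", simplified]
  show ?thesis
  proof (cases "length w \<le> length s")
    case True
    with \<alpha> assms(8) obtain v where "s = w @ v" by (metis conc_eq_conc_prefixE)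
    with \<open>s \<in> S\<close> prefix_closed have "delta_f_star S E f [] w = w" by (blast intro: access_word)
    with assms(8) show ?thesis by simp
  next
    case False
    with \<alpha> assms(8) obtain u where u: "w = s @ u" "e = u \<frown> \<alpha>'"
      by (metis conc_eq_conc_prefixE nat_le_linear)
    have "delta_f_star S E f [] w = delta_f_star S E f s u"
      using access_word \<open>s \<in> S\<close> by (simp add: u(1) delta_f_star_append)
    with delta_f_star_conc_mem_iff[OF assms(4-6) \<open>s \<in> S\<close>] u \<open>e \<in> E\<close> \<alpha> show ?thesis by simp
  qed
qed

end
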